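(* Let $A,B\subseteq\mathbb{N}$ with $B\subsetneq A$. Then $m(B)<m(A)$.
   Context: $\mathbb{N}=\{1,2,3,\dots\}$, $\mathbb{N}_0=\mathbb{N}\cup\{0\}$. $\mathbf{No}$ denotes Conway's ordered field of surreal numbers, $\omega=\{0,1,2,\dots\mid\ \}$ its first infinite element. An omnific integer is a surreal $x$ with $x=\{x-1\mid x+1\}$; $\mathbf{Nn}$ (surnatural numbers) is the class of nonnegative omnific integers, $\mathbb{N}_0\subset\mathbf{Nn}$. For $A\subseteq\mathbb{N}$, $\kappa_A(n)=|A\cap\{1,\dots,n\}|$. For $f,g:\mathbb{N}\to\mathbb{N}_0$, $f\overset{\to}{=}g$ means $f(n)=g(n)$ for all $n\ge N$ for some $N$; $f\overset{\to}{<}g$ means $f(n)<g(n)$ for all $n\ge N$ for some $N$. Axiom of Extension (standing assumption): every nondecreasing $f:\mathbb{N}\to\mathbb{N}_0$ has an extension $\hat f:\mathbf{Nn}\to\mathbf{Nn}$ with $\hat f(n)=f(n)$ for $n\in\mathbb{N}$ (constant sequences extend to the same constants, the identity extends to the identity), such that for nondecreasing $f,g$: $f\overset{\to}{=}g\Rightarrow\hat f(\nu)=\hat g(\nu)$ for all $\nu\in\mathbf{Nn}\setminus\mathbb{N}$; $f\overset{\to}{<}g\Rightarrow\hat f(\nu)<\hat g(\nu)$ for all $\nu\in\mathbf{Nn}\setminus\mathbb{N}$; and $\widehat{f+g}=\hat f+\hat g$, $\widehat{f\cdot g}=\hat f\cdot\hat g$, $\widehat{f\circ g}=\hat f\circ\hat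 g$ where defined. The magnum of $A\subseteq\mathbb{N}$ is $m(A):=\hat{\kappa_A}(\omega)$. *)

theory Defs
  imports Main
begin

definition kappa :: "nat set \<Rightarrow> nat \<Rightarrow> nat" where
  "kappa A n = card (A \<inter> {1..n})"

(* f : N \<rightarrow> N_0 nondecreasing (only values at n \<ge> 1 matter; N = {1,2,...}) *)
definition nondec :: "(nat \<Rightarrow> nat) \<Rightarrow> bool" where
  "nondec f \<longleftrightarrow> (\<forall>m n. 1 \<le> m \<longrightarrow> m \<le> n \<longrightarrow> f m \<le> f n)"

definition ev_eq :: "(nat \<Rightarrow> nat) \<Rightarrow> (nat \<Rightarrow> nat) \<Rightarrow> bool" where
  "ev_eq f g \<longleftrightarrow> (\<exists>N. \<forall>n\<ge>N. f n = g n)"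

definition ev_less :: "(nat \<Rightarrow> nat) \<Rightarrow> (nat \<Rightarrow> nat) \<Rightarrow> bool" where
  "ev_less f g \<longleftrightarrow> (\<exists>N. \<forall>n\<ge>N. f n < g n)"

(* The type 'a plays the role of Nn (surnatural numbers); the standard naturals
   N_0 are the image of of_nat; Nn \ N is taken as the non-standard elements. *)
definition extension_axiom :: "((nat \<Rightarrow> nat) \<Rightarrow> 'a::linordered_semidom \<Rightarrow> 'a) \<Rightarrow> bool" where
  "extension_axiom ext \<longleftrightarrow>
     (\<forall>f. nondec f \<longrightarrow> (\<forall>n\<ge>1. ext f (of_nat n) = of_nat (f n))) \<and>
     (\<forall>c. ext (\<lambda>_. c) = (\<lambda>_. of_nat c)) \<and>
     ext (\<lambda>n. n) = (\<lambda>x. x) \<and>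
     (\<forall>f g. nondec f \<longrightarrow> nondec g \<longrightarrow> ev_eq f g \<longrightarrow>
        (\<forall>\<nu>. \<nu> \<notin> range of_nat \<longrightarrow> ext f \<nu> = ext g \<nu>)) \<and>
     (\<forall>f g. nondec f \<longrightarrow> nondec g \<longrightarrow> ev_less f g \<longrightarrow>
        (\<forall>\<nu>. \<nu> \<notin> range of_nat \<longrightarrow> ext f \<nu> < ext g \<nu>)) \<and>
     (\<forall>f g. nondec f \<longrightarrow> nondec g \<longrightarrow> ext (\<lambda>n. f n + g n) = (\<lambda>x. ext f x + ext g x)) \<and>
     (\<forall>f g. nondec f \<longrightarrow> nondec g \<longrightarrow> ext (\<lambda>n. f n * g n) = (\<lambda>x. ext f x * ext g x)) \<and>
     (\<forall>f g. nondec f \<longrightarrow> nondec g \<longrightarrow> (\<forall>n\<ge>1. g n \<ge> 1) \<longrightarrow>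
        ext (f \<circ> g) = ext f \<circ> ext g)"

definition magnum :: "((nat \<Rightarrow> nat) \<Rightarrow> 'a::linordered_semidom \<Rightarrow> 'a) \<Rightarrow> 'a \<Rightarrow> nat set \<Rightarrow> 'a" where
  "magnum ext \<omega> A = ext (kappa A) \<omega>"

end

theory Submission
  imports Defs
begin

text \<open>Pick \<open>a \<in> A - B\<close>. From \<open>a\<close> on, \<open>A \<inter> {1..n}\<close> properly contains \<open>B \<inter> {1..n}\<close>, so
  \<open>\<kappa>\<^sub>B < \<kappa>\<^sub>A\<close> eventually; since \<open>\<omega>\<close> exceeds every standard natural, the Axiom of
  Extension turns this eventual inequality into \<open>m(B) < m(A)\<close>.\<close>

lemma nondec_kappa: "nondec (kappa A)"
  unfolding nondec_def kappa_def
  by (auto intro!: card_mono)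

lemma ev_less_kappa_psubset:
  assumes "B \<subset> A" and "0 \<notin> A"
  shows "ev_less (kappa B) (kappa A)"
proof -
  obtain a where a: "a \<in> A" "a \<notin> B" using assms(1) by blast
  have "a \<ge> 1" using a assms(2) by (cases a) auto
  have "kappa B n < kappa A n" if "a \<le> n" for n
  proof -
    have "B \<inter> {1..n} \<subset> A \<inter> {1..n}"
      using a \<open>a \<ge> 1\<close> that assms(1) by auto
    then show ?thesis
      unfolding kappa_def by (intro psubset_card_mono) auto
  qed
  then show ?thesis
    unfolding ev_less_def by blast
qed

lemma extension_axiom_ev_less:
  assumes "extension_axiom ext" "nondec f" "nondec g" "ev_less f g" "\<nu> \<notin> range of_nat"
  shows "ext f \<nu> < ext g \<nu>"
  using assms unfolding extension_axiom_def by blast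

theorem theorem6p3:
  fixes ext :: "(nat \<Rightarrow> nat) \<Rightarrow> 'a::linordered_semidom \<Rightarrow> 'a"
    and \<omega> :: 'a
    and A B :: "nat set"
  assumes "extension_axiom ext"
    and "\<forall>n::nat. of_nat n < \<omega>"
    and "0 \<notin> A"
    and "B \<subset> A"
  shows "magnum ext \<omega> B < magnum ext \<omega> A"
proof -
  have "\<omega> \<notin> range of_nat"
    using assms(2) by auto
  then show ?thesis
    unfolding magnum_def
    using extension_axiom_ev_less[OF assms(1) nondec_kappa nondec_kappa
        ev_less_kappa_psubset[OF assms(4,3)]]
    by blast
qed

end
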